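(* Let $n,R\in\mathbb N$, $x_1,\dots,x_n\in X$, $\lambda>0$, $\tau\in(0,1]$. Let $u_1,\dots,u_R$ be i.i.d. uniform on $[n]$. If $$R\ge\frac{16n\kappa^2}{\lambda n+\kappa^2}\log\frac{4n}{\tau},$$ then with probability at least $1-\tau$, $$\frac nR\sum_{i=1}^R\widehat\ell(x_{u_i},\lambda)<\max\Big(5,\ \frac65\,d_{\mathrm{eff}}(\lambda)\Big).$$
   Context: Let $X$ be a Polish space and $K:X\times X\to\mathbb R$ a continuous positive semidefinite kernel with RKHS $\mathcal H$, $K_x=K(x,\cdot)$, and $K(x,x)\le\kappa^2$ for all $x$ ($\kappa>0$). For $f,g\in\mathcal H$, $f\otimes g$ denotes $h\mapsto\langle g,h\rangle_{\mathcal H}f$. $[n]=\{1,\dots,n\}$, $\widehat C=\frac1n\sum_{i=1}^nK_{x_i}\otimes K_{x_i}$, $\widehat\ell(x,\lambda)=\frac1n\|(\widehat C+\lambda I)^{-1/2}K_x\|^2_{\mathcal H}$, and $d_{\mathrm{eff}}(\lambda)=\sum_{i=1}^n\widehat\ell(x_i,\lambda)$ (equivalently the trace of $\widehat K(\widehat K+\lambda nI)^{-1}$ with $\widehat K_{ij}=K(x_i,x_j)$). *)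

theory Defs
  imports "HOL-Analysis.Analysis" "HOL-Probability.Probability"
begin

text \<open>The RKHS is represented by a real Hilbert space 'h with feature map phi,
  K x = phi x, K(x,y) = inner (phi x) (phi y), and span (range phi) dense.\<close>

definition emp_cov :: "('x \<Rightarrow> 'h::real_inner) \<Rightarrow> (nat \<Rightarrow> 'x) \<Rightarrow> nat \<Rightarrow> 'h \<Rightarrow> 'h" where
  "emp_cov phi xs n h = (1 / real n) *\<^sub>R (\<Sum>i=1..n. inner (phi (xs i)) h *\<^sub>R phi (xs i))"

definition reg_inv :: "('x \<Rightarrow> 'h::real_inner) \<Rightarrow> (nat \<Rightarrow> 'x) \<Rightarrow> nat \<Rightarrow> real \<Rightarrow> 'h \<Rightarrow> 'h" where
  "reg_inv phi xs n lam v = (THE w. emp_cov phi xs n w + lam *\<^sub>R w = v)"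

text \<open>Empirical leverage score
  l(x,lambda) = (1/n) ||(C+lambda I)^{-1/2} K_x||^2 = (1/n) <K_x, (C+lambda I)^{-1} K_x>.\<close>
definition lev :: "('x \<Rightarrow> 'h::real_inner) \<Rightarrow> (nat \<Rightarrow> 'x) \<Rightarrow> nat \<Rightarrow> real \<Rightarrow> 'x \<Rightarrow> real" where
  "lev phi xs n lam x = (1 / real n) * inner (phi x) (reg_inv phi xs n lam (phi x))"

definition d_eff :: "('x \<Rightarrow> 'h::real_inner) \<Rightarrow> (nat \<Rightarrow> 'x) \<Rightarrow> nat \<Rightarrow> real \<Rightarrow> real" where
  "d_eff phi xs n lam = (\<Sum>i=1..n. lev phi xs n lam (xs i))"

end

theory Submission
  imports Defs
begin

text \<open>The regularised operator C + lam I is lam I plus finitely many positive rank-one terms,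
  so it is invertible (add the terms one at a time, Sherman--Morrison). If (C + lam I) w = K x_j,
  then a = n l(x_j, lam) = <K x_j, w> = lam |w|^2 + (1/n) sum_i <K x_i, w>^2, which by
  Cauchy--Schwarz is at least a^2 (lam / kappa^2 + 1/n); hence 0 <= a <= M = n kappa^2 / (lam n + kappa^2).
  The estimator is thus the mean of R i.i.d. variables with values in [0, M] and mean d_eff,
  and a multiplicative Chernoff bound with parameter 9 / (50 M) bounds the probability that it
  reaches max 5 (6/5 d_eff) by exp (- R / (16 M)), which is at most tau.\<close>

definition ridge_op :: "real \<Rightarrow> real \<Rightarrow> ('i \<Rightarrow> 'h::real_inner) \<Rightarrow> 'i set \<Rightarrow> 'h \<Rightarrow> 'h" where
  "ridge_op lam c f A w = lam *\<^sub>R w + c *\<^sub>R (\<Sum>i\<in>A. inner (f i) w *\<^sub>R f i)"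

lemma ridge_op_diff: "ridge_op lam c f A (v - w) = ridge_op lam c f A v - ridge_op lam c f A w"
  unfolding ridge_op_def by (simp add: inner_diff_right scaleR_diff_left sum_subtractf algebra_simps)

lemma ridge_op_scaleR: "ridge_op lam c f A (a *\<^sub>R w) = a *\<^sub>R ridge_op lam c f A w"
  unfolding ridge_op_def by (simp add: scaleR_sum_right algebra_simps)

lemma ridge_op_insert:
  assumes "finite A" "i \<notin> A"
  shows "ridge_op lam c f (insert i A) w = ridge_op lam c f A w + (c * inner (f i) w) *\<^sub>R f i"
  unfolding ridge_op_def using assms by (simp add: algebra_simps)

lemma inner_ridge_op_self:
  "inner (ridge_op lam c f A w) w = lam * inner w w + c * (\<Sum>i\<in>A. (inner (f i) w)\<^sup>2)"
  unfolding ridge_op_def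
  by (simp add: inner_add_left inner_sum_left power2_eq_square)

lemma inner_ridge_op_self_ge:
  assumes "c \<ge> 0"
  shows "inner (ridge_op lam c f A w) w \<ge> lam * inner w w"
  unfolding inner_ridge_op_self using assms by (simp add: sum_nonneg)

lemma ridge_op_surj:
  assumes "lam > 0" "c \<ge> 0" "finite A"
  shows "\<exists>w. ridge_op lam c f A w = v"
  using assms(3) proof (induction A arbitrary: v rule: finite_induct)
  case empty
  have "ridge_op lam c f {} ((1 / lam) *\<^sub>R v) = v"
    using assms(1) unfolding ridge_op_def by simp
  then show ?case by blast
next
  case (insert i A)
  \<comment> \<open>Sherman--Morrison: subtract from the solution for \<open>v\<close> the multiple of the solution for
    \<open>f i\<close> that absorbs the new rank-one term.\<close>
  obtain a where a: "ridge_op lam c f A a = v" using insert.IH by blast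
  obtain g where g: "ridge_op lam c f A g = f i" using insert.IH by blast
  have "inner (f i) g \<ge> lam * inner g g"
    using inner_ridge_op_self_ge[OF assms(2), where lam=lam and f=f and A=A and w=g] g
    by (simp add: inner_commute)
  then have "inner (f i) g \<ge> 0"
    using assms(1) by (smt (verit) inner_ge_zero mult_nonneg_nonneg)
  then have denom_pos: "1 + c * inner (f i) g > 0"
    using assms(2) by (simp add: add_pos_nonneg)
  define \<beta> where "\<beta> = c * inner (f i) a / (1 + c * inner (f i) g)"
  define w where "w = a - \<beta> *\<^sub>R g"
  have "c * inner (f i) w = c * inner (f i) a - \<beta> * (c * inner (f i) g)"
    unfolding w_def by (simp add: inner_diff_right algebra_simps)
  also have "\<dots> = \<beta>"
    using denom_pos unfolding \<beta>_def by (simp add: field_simps)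
  finally have "c * inner (f i) w = \<beta>" .
  then have "ridge_op lam c f (insert i A) w = v"
    unfolding ridge_op_insert[OF insert.hyps] w_def by (simp add: ridge_op_diff ridge_op_scaleR a g)
  then show ?case by blast
qed

lemma ridge_op_inj:
  assumes "lam > 0" "c \<ge> 0" "ridge_op lam c f A v = ridge_op lam c f A w"
  shows "v = w"
proof -
  have "lam * inner (v - w) (v - w) \<le> 0"
    using inner_ridge_op_self_ge[OF assms(2), where lam=lam and f=f and A=A and w="v - w"] assms(3)
    by (simp add: ridge_op_diff)
  then have "inner (v - w) (v - w) = 0"
    using assms(1) inner_ge_zero[of "v - w"] by (simp add: mult_le_0_iff)
  then show ?thesis by simp
qed

lemma nonneg_le_of_square_le:
  fixes a M :: real
  assumes "M > 0" "a\<^sup>2 \<le> M * a"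
  shows "0 \<le> a" "a \<le> M"
proof -
  have "0 \<le> M * a"
    using assms(2) zero_le_power2[of a] by linarith
  with assms(1) show "0 \<le> a" by (simp add: zero_le_mult_iff)
  show "a \<le> M"
  proof (cases "a = 0")
    case False
    with \<open>0 \<le> a\<close> have "a > 0" by simp
    with assms(2) show ?thesis by (simp add: power2_eq_square)
  qed (use assms in simp)
qed

lemma ridge_leverage_bounds:
  assumes "lam > 0" "c \<ge> 0" "finite A" "j \<in> A" "inner (f j) (f j) \<le> k" "k > 0"
    and solves: "ridge_op lam c f A w = f j"
  shows "0 \<le> inner (f j) w" "inner (f j) w \<le> k / (lam + c * k)"
proof -
  define a where "a = inner (f j) w"
  have "a\<^sup>2 \<le> k * inner w w"
    unfolding a_def
    using Cauchy_Schwarz_ineq[of "f j" w] mult_right_mono[OF assms(5) inner_ge_zero[of w]]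
    by linarith
  moreover have "a\<^sup>2 \<le> (\<Sum>i\<in>A. (inner (f i) w)\<^sup>2)"
    unfolding a_def using assms(3,4) by (intro member_le_sum) auto
  moreover have "a = lam * inner w w + c * (\<Sum>i\<in>A. (inner (f i) w)\<^sup>2)"
    using inner_ridge_op_self[of lam c f A w] unfolding solves a_def by simp
  ultimately have "lam * (a\<^sup>2 / k) + c * a\<^sup>2 \<le> a"
    using assms(1,2,6) by (smt (verit) mult_left_mono pos_divide_le_eq mult.commute)
  moreover have "lam + c * k > 0"
    using assms(1,2,6) by (simp add: add_pos_nonneg)
  ultimately have "a\<^sup>2 \<le> k / (lam + c * k) * a"
    using assms(6) by (simp add: field_simps)
  from nonneg_le_of_square_le[OF _ this] \<open>lam + c * k > 0\<close> assms(6)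
  show "0 \<le> inner (f j) w" "inner (f j) w \<le> k / (lam + c * k)"
    unfolding a_def by simp_all
qed

lemma emp_cov_add_scaleR:
  "emp_cov phi xs n w + lam *\<^sub>R w = ridge_op lam (1 / real n) (\<lambda>i. phi (xs i)) {1..n} w"
  unfolding emp_cov_def ridge_op_def by simp

lemma ridge_op_reg_inv:
  assumes "lam > 0"
  shows "ridge_op lam (1 / real n) (\<lambda>i. phi (xs i)) {1..n} (reg_inv phi xs n lam v) = v"
proof -
  have c: "1 / real n \<ge> 0" by simp
  have "\<exists>!w. emp_cov phi xs n w + lam *\<^sub>R w = v"
    unfolding emp_cov_add_scaleR
    using ridge_op_surj[OF assms c finite_atLeastAtMost] ridge_op_inj[OF assms c] by metis
  from theI'[OF this] show ?thesis
    unfolding reg_inv_def emp_cov_add_scaleR .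
qed

lemma lev_bounds:
  assumes "lam > 0" "j \<in> {1..n}" "inner (phi (xs j)) (phi (xs j)) \<le> k" "k > 0"
  shows "0 \<le> real n * lev phi xs n lam (xs j)"
    "real n * lev phi xs n lam (xs j) \<le> real n * k / (lam * real n + k)"
proof -
  have "n > 0" using assms(2) by simp
  then have lev_eq: "real n * lev phi xs n lam (xs j)
      = inner (phi (xs j)) (reg_inv phi xs n lam (phi (xs j)))"
    unfolding lev_def by simp
  have "k / (lam + 1 / real n * k) = real n * k / (lam * real n + k)"
    using \<open>n > 0\<close> by (simp add: field_simps)
  with ridge_leverage_bounds[OF assms(1) _ finite_atLeastAtMost assms(2) _ assms(4)
      ridge_op_reg_inv[OF assms(1)]] assms(3)
  show "0 \<le> real n * lev phi xs n lam (xs j)"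
    "real n * lev phi xs n lam (xs j) \<le> real n * k / (lam * real n + k)"
    unfolding lev_eq by simp_all
qed

lemma exp_9_50_le: "exp (9/50 :: real) \<le> 6/5"
proof -
  have "exp (9/50 :: real) = exp (9/400) ^ 8"
    by (subst exp_of_nat_mult[symmetric]) simp
  also have "\<dots> \<le> (1 + 9/400 + (9/400)\<^sup>2) ^ 8"
    by (intro power_mono exp_bound) auto
  also have "\<dots> \<le> 6/5"
    by (simp add: power2_eq_square power_divide)
  finally show ?thesis .
qed

lemma exp_le_chord:
  fixes M y :: real
  assumes "M > 0" "0 \<le> y" "y \<le> M"
  shows "exp (9/50 / M * y) \<le> 1 + y / (5 * M)"
proof -
  define s where "s = y / M"
  have s: "0 \<le> s" "s \<le> 1"
    using assms unfolding s_def by auto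
  have "exp (9/50 * ((1 - s) *\<^sub>R 0 + s *\<^sub>R 1)) \<le> (1 - s) * exp (9/50 * 0) + s * exp (9/50 * (1::real))"
    by (rule convex_onD[OF convex_on_exp]) (use s in auto)
  then have "exp (9/50 * s) \<le> (1 - s) + s * exp (9/50)"
    by simp
  also have "\<dots> \<le> (1 - s) + s * (6/5)"
    using exp_9_50_le s by (intro add_left_mono mult_left_mono) auto
  finally show ?thesis
    unfolding s_def by simp
qed

lemma integrable_pmf_bounded:
  fixes f :: "'a \<Rightarrow> real"
  assumes "\<And>x. x \<in> set_pmf p \<Longrightarrow> \<bar>f x\<bar> \<le> B"
  shows "integrable (measure_pmf p) f"
  by (rule measure_pmf.integrable_const_bound[where B = B]) (use assms in \<open>auto intro: AE_pmfI\<close>)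

lemma expectation_exp_le:
  fixes q :: "'a \<Rightarrow> real"
  assumes "M > 0" and q: "\<And>x. x \<in> set_pmf p \<Longrightarrow> 0 \<le> q x \<and> q x \<le> M"
  shows "measure_pmf.expectation p (\<lambda>x. exp (9/50 / M * q x))
           \<le> exp (measure_pmf.expectation p q / (5 * M))"
proof -
  have int_q: "integrable (measure_pmf p) q"
    using q by (intro integrable_pmf_bounded[where B = M]) auto
  have int_exp: "integrable (measure_pmf p) (\<lambda>x. exp (9/50 / M * q x))"
    using q assms(1) by (intro integrable_pmf_bounded[where B = "exp (9/50)"]) (auto simp: pos_divide_le_eq)
  have "measure_pmf.expectation p (\<lambda>x. exp (9/50 / M * q x))
        \<le> measure_pmf.expectation p (\<lambda>x. 1 + q x / (5 * M))"
    using int_q int_exp q assms(1)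
    by (intro integral_mono_AE AE_pmfI exp_le_chord) auto
  also have "\<dots> = 1 + measure_pmf.expectation p q / (5 * M)"
    using int_q by simp
  also have "\<dots> \<le> exp (measure_pmf.expectation p q / (5 * M))"
    by (rule exp_ge_add_one_self)
  finally show ?thesis .
qed

lemma prob_sum_ge_Pi_pmf_le:
  fixes q :: "'a \<Rightarrow> real"
  assumes "finite I" "t \<ge> 0" and int: "integrable (measure_pmf p) (\<lambda>x. exp (t * q x))"
  shows "measure_pmf.prob (Pi_pmf I d (\<lambda>_. p)) {u. (\<Sum>i\<in>I. q (u i)) \<ge> s}
           \<le> measure_pmf.expectation p (\<lambda>x. exp (t * q x)) ^ card I / exp (t * s)"
proof -
  define P where "P = Pi_pmf I d (\<lambda>_. p)"
  define Z where "Z u = (\<Prod>i\<in>I. exp (t * q (u i)))" for u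
  have Z_eq: "Z u = exp (t * (\<Sum>i\<in>I. q (u i)))" for u
    unfolding Z_def using assms(1) by (simp add: exp_sum sum_distrib_left)
  have "measure_pmf.prob P {u. (\<Sum>i\<in>I. q (u i)) \<ge> s}
        \<le> measure_pmf.prob P {u \<in> space (measure_pmf P). Z u \<ge> exp (t * s)}"
    using assms(2) by (intro measure_pmf.finite_measure_mono) (auto simp: Z_eq mult_left_mono)
  also have "\<dots> \<le> measure_pmf.expectation P Z / exp (t * s)"
    unfolding P_def Z_def using assms(1) int
    by (intro integral_Markov_inequality_measure integrable_prod_Pi_pmf) (auto intro!: prod_nonneg)
  also have "measure_pmf.expectation P Z = measure_pmf.expectation p (\<lambda>x. exp (t * q x)) ^ card I"
    unfolding P_def Z_def using assms(1) int by (subst expectation_prod_Pi_pmf) auto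
  finally show ?thesis
    unfolding P_def .
qed

lemma sum_Pi_pmf_upper_tail:
  fixes q :: "'a \<Rightarrow> real" and M b :: real
  assumes "finite I" "M > 0" and q: "\<And>x. x \<in> set_pmf p \<Longrightarrow> 0 \<le> q x \<and> q x \<le> M"
    and "b \<ge> 5" "b \<ge> 6/5 * measure_pmf.expectation p q"
  shows "measure_pmf.prob (Pi_pmf I d (\<lambda>_. p)) {u. (\<Sum>i\<in>I. q (u i)) \<ge> real (card I) * b}
           \<le> exp (- real (card I) / (16 * M))"
proof -
  define N where "N = real (card I)"
  define \<mu> where "\<mu> = measure_pmf.expectation p q"
  define t where "t = 9/50 / M"
  have int_exp: "integrable (measure_pmf p) (\<lambda>x. exp (t * q x))"
    using q assms(2) unfolding t_def
    by (intro integrable_pmf_bounded[where B = "exp (9/50)"]) (auto simp: pos_divide_le_eq)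
  have mgf_nonneg: "measure_pmf.expectation p (\<lambda>x. exp (t * q x)) \<ge> 0"
    by (simp add: integral_nonneg_AE)
  have exponent: "N * (\<mu> / (5 * M)) - t * (N * b) = - (N / M) * (9/50 * b - \<mu> / 5)"
    unfolding t_def using assms(2) by (simp add: field_simps)
  have "measure_pmf.prob (Pi_pmf I d (\<lambda>_. p)) {u. (\<Sum>i\<in>I. q (u i)) \<ge> N * b}
        \<le> measure_pmf.expectation p (\<lambda>x. exp (t * q x)) ^ card I / exp (t * (N * b))"
    using assms(1,2) int_exp unfolding t_def by (intro prob_sum_ge_Pi_pmf_le) auto
  also have "\<dots> \<le> exp (\<mu> / (5 * M)) ^ card I / exp (t * (N * b))"
    using expectation_exp_le[OF assms(2) q] mgf_nonneg
    unfolding t_def \<mu>_def by (intro divide_right_mono power_mono) auto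
  also have "\<dots> = exp (- (N / M) * (9/50 * b - \<mu> / 5))"
    unfolding N_def exponent[symmetric, unfolded N_def]
    by (simp add: exp_diff exp_of_nat_mult[symmetric])
  also have "\<dots> \<le> exp (- N / (16 * M))"
  proof -
    have "9/50 * b - \<mu> / 5 \<ge> 1/16"
      using assms(4,5) unfolding \<mu>_def by linarith
    from mult_left_mono[OF this, of "N / M"] assms(2) show ?thesis
      unfolding N_def by simp
  qed
  finally show ?thesis
    unfolding N_def .
qed

lemma mean_scaled_lev_pmf_of_set:
  assumes "n \<ge> 1"
  shows "measure_pmf.expectation (pmf_of_set {1..n}) (\<lambda>j. real n * lev phi xs n lam (xs j))
           = d_eff phi xs n lam"
  using assms unfolding d_eff_def by (simp add: integral_pmf_of_set sum_distrib_left[symmetric])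

lemma sample_size_bound:
  fixes M tau :: real
  assumes "M > 0" "0 < tau" "tau \<le> 1" "n \<ge> 1" "real R \<ge> 16 * M * ln (4 * real n / tau)"
  shows "R > 0" "exp (- real R / (16 * M)) \<le> tau"
proof -
  have "ln (4 * real n / tau) > 0"
    using assms(2-4) by (simp add: field_simps)
  with assms(1,5) show "R > 0"
    by (smt (verit) mult_pos_pos of_nat_0_less_iff)
  have "exp (- real R / (16 * M)) \<le> exp (- ln (4 * real n / tau))"
    using assms(1,5) by (simp add: field_simps)
  also have "\<dots> \<le> tau"
    using assms(2,4) by (simp add: exp_minus exp_ln field_simps)
  finally show "exp (- real R / (16 * M)) \<le> tau" .
qed

theorem mainTheorem10:
  fixes K :: "'x::polish_space \<Rightarrow> 'x \<Rightarrow> real"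
    and phi :: "'x \<Rightarrow> 'h::{real_inner, complete_space}"
    and xs :: "nat \<Rightarrow> 'x"
    and n R :: nat and lam tau kappa :: real
  assumes feature: "\<And>x y. K x y = inner (phi x) (phi y)"
    and dense: "closure (span (range phi)) = UNIV"
    and cont: "continuous_on UNIV (\<lambda>p. K (fst p) (snd p))"
    and kappa_pos: "kappa > 0"
    and bounded: "\<And>x. K x x \<le> kappa\<^sup>2"
    and n_pos: "n \<ge> 1"
    and lam_pos: "lam > 0"
    and tau: "0 < tau" "tau \<le> 1"
    and R_large: "real R \<ge> 16 * real n * kappa\<^sup>2 / (lam * real n + kappa\<^sup>2) * ln (4 * real n / tau)"
  shows "measure_pmf.prob (Pi_pmf {1..R} 0 (\<lambda>_. pmf_of_set {1..n}))
           {u. real n / real R * (\<Sum>i=1..R. lev phi xs n lam (xs (u i)))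
                 < max 5 (6/5 * d_eff phi xs n lam)} \<ge> 1 - tau"
proof -
  define q where "q j = real n * lev phi xs n lam (xs j)" for j
  define M where "M = real n * kappa\<^sup>2 / (lam * real n + kappa\<^sup>2)"
  define b where "b = max 5 (6/5 * d_eff phi xs n lam)"
  define P where "P = Pi_pmf {1..R} 0 (\<lambda>_. pmf_of_set {1..n})"
  define bad where "bad = {u. real R * b \<le> (\<Sum>i\<in>{1..R}. q (u i))}"
  have M_pos: "M > 0"
    unfolding M_def using n_pos lam_pos kappa_pos by (simp add: add_pos_pos)
  have q_bounds: "0 \<le> q j \<and> q j \<le> M" if "j \<in> set_pmf (pmf_of_set {1..n})" for j
    using lev_bounds[OF lam_pos _ _, of j n phi xs "kappa\<^sup>2"] that n_pos kappa_pos
      bounded[of "xs j"] unfolding feature q_def M_def by auto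
  have mean_q: "measure_pmf.expectation (pmf_of_set {1..n}) q = d_eff phi xs n lam"
    unfolding q_def by (rule mean_scaled_lev_pmf_of_set[OF n_pos])
  have "real R \<ge> 16 * M * ln (4 * real n / tau)"
    using R_large unfolding M_def by simp
  note R = sample_size_bound[OF M_pos tau n_pos this]
  have "measure_pmf.prob P bad \<le> exp (- real R / (16 * M))"
    unfolding P_def bad_def
    using sum_Pi_pmf_upper_tail[where I = "{1..R}" and p = "pmf_of_set {1..n}" and q = q
        and b = b and d = 0, OF _ M_pos q_bounds] mean_q
    by (simp add: b_def)
  with R(2) have "measure_pmf.prob P bad \<le> tau"
    by linarith
  moreover have "{u. real n / real R * (\<Sum>i=1..R. lev phi xs n lam (xs (u i))) < b}
      = space (measure_pmf P) - bad"
    using R(1) unfolding bad_def q_def sum_distrib_left[symmetric]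
    by (auto simp: pos_divide_less_eq mult.commute)
  ultimately show ?thesis
    using measure_pmf.prob_compl[of bad P] unfolding P_def b_def by simp
qed

end
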